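(* For each fixed positive integer $K$, with $\theta=(K,P)$, $$\frac{C_{\rm K}(\theta)}{p(\theta)}\sim 1+\frac{P}{K^3}\qquad (P\to\infty).$$
   Context: For positive integers $K\le P$, $\theta=(K,P)$: $q(\theta)=\binom{P-K}{K}/\binom{P}{K}$ if $2K\le P$ and $0$ otherwise; $p(\theta)=1-q(\theta)$; $r(\theta)=\binom{P-2K}{K}/\binom{P}{K}$ if $3K\le P$ and $0$ otherwise; $\beta(\theta)=(1-q)^3+q^3-qr$; $C_{\rm K}(\theta)=\beta(\theta)/(1-q(\theta))^2$ is the clustering coefficient $\mathbb{P}[E_{12}\mid E_{13}\cap E_{23}]$ of the random key graph (nodes receive i.i.d. uniform $K$-subsets of $\{1,\dots,P\}$, adjacent iff subsets intersect). Note $p(\theta)$ equals the clustering coefficient $C_{\rm ER}(p(\theta))$ of the Erdős–Rényi graph with edge probability $p(\theta)$. *)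

theory Defs
  imports Complex_Main "HOL-Library.Landau_Symbols"
begin

definition q_rkg :: "nat \<Rightarrow> nat \<Rightarrow> real" where
  "q_rkg K P = (if 2 * K \<le> P then real ((P - K) choose K) / real (P choose K) else 0)"

definition p_rkg :: "nat \<Rightarrow> nat \<Rightarrow> real" where
  "p_rkg K P = 1 - q_rkg K P"

definition r_rkg :: "nat \<Rightarrow> nat \<Rightarrow> real" where
  "r_rkg K P = (if 3 * K \<le> P then real ((P - 2 * K) choose K) / real (P choose K) else 0)"

definition beta_rkg :: "nat \<Rightarrow> nat \<Rightarrow> real" where
  "beta_rkg K P = (1 - q_rkg K P) ^ 3 + q_rkg K P ^ 3 - q_rkg K P * r_rkg K P"

definition C_K :: "nat \<Rightarrow> nat \<Rightarrow> real" where
  "C_K K P = beta_rkg K P / (1 - q_rkg K P) ^ 2"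

end

theory Submission
  imports Defs
begin

text \<open>Put a(i) = K / (P - i). For P \<ge> 3K the binomial ratios are products,
  q = \<Prod>(1 - a(i)) and r = \<Prod>(1 - 2 a(i)) over i < K, and the estimate
  (\<Sum>e) \<Prod>x \<le> \<Prod>(x + e) - \<Prod>x \<le> \<Sum>e squeezes p = 1 - q between (\<Sum>a(i)) q and \<Sum>a(i),
  and q^2 - r = \<Prod>(1 - 2 a(i) + a(i)^2) - \<Prod>(1 - 2 a(i)) between (\<Sum>a(i)^2) r and \<Sum>a(i)^2.
  As q and r tend to 1, this gives p \<sim> K^2/P and q^2 - r \<sim> K^3/P^2. Finally
  C_K / p = 1 + q (q^2 - r) / p^3, and the second summand is \<sim> (K^3/P^2) / (K^2/P)^3 = P/K^3.\<close>

lemma sum_mult_prod_le_prod_add_diff: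
  fixes x e :: "'i \<Rightarrow> real"
  assumes "finite I" "\<And>i. i \<in> I \<Longrightarrow> 0 \<le> x i \<and> x i \<le> 1 \<and> 0 \<le> e i"
  shows "sum e I * prod x I \<le> prod (\<lambda>i. x i + e i) I - prod x I"
  using assms
proof (induction I rule: finite_induct)
  case (insert j I)
  let ?A = "prod x I" and ?B = "prod (\<lambda>i. x i + e i) I"
  have IH: "sum e I * ?A \<le> ?B - ?A" using insert by auto
  have xj: "0 \<le> x j" "x j \<le> 1" "0 \<le> e j" using insert.prems by auto
  have A: "0 \<le> ?A" "?A \<le> 1" using insert.prems by (auto intro: prod_nonneg prod_le_1)
  have AB: "?A \<le> ?B" using insert.prems by (intro prod_mono) auto
  have "x j * (sum e I * ?A) \<le> x j * (?B - ?A)" using IH xj by (intro mult_left_mono)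
  moreover have "e j * (x j * ?A) \<le> e j * ?B"
    using xj A AB by (intro mult_left_mono) (auto intro: mult_left_le_one_le order.trans)
  ultimately show ?case using insert.hyps by (simp add: algebra_simps)
qed simp

lemma prod_add_diff_le_sum:
  fixes x e :: "'i \<Rightarrow> real"
  assumes "finite I" "\<And>i. i \<in> I \<Longrightarrow> 0 \<le> x i \<and> 0 \<le> e i \<and> x i + e i \<le> 1"
  shows "prod (\<lambda>i. x i + e i) I - prod x I \<le> sum e I"
  using assms
proof (induction I rule: finite_induct)
  case (insert j I)
  let ?A = "prod x I" and ?B = "prod (\<lambda>i. x i + e i) I"
  have IH: "?B - ?A \<le> sum e I" using insert by auto
  have xj: "0 \<le> x j" "0 \<le> e j" "x j + e j \<le> 1" using insert.prems by auto
  have B: "?B \<le> 1" using insert.prems by (intro prod_le_1) force+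
  have AB: "?A \<le> ?B" using insert.prems by (intro prod_mono) force
  have "x j * (?B - ?A) \<le> ?B - ?A" using xj AB by (intro mult_left_le_one_le) auto
  moreover have "e j * ?B \<le> e j" using xj B by (intro mult_left_le) auto
  ultimately show ?case using IH insert.hyps by (simp add: algebra_simps)
qed simp

lemma binomial_diff_div_binomial:
  assumes "m + K \<le> P"
  shows "real ((P - m) choose K) / real (P choose K) = (\<Prod>i<K. 1 - real m / (real P - real i))"
proof -
  have num: "real ((P - m) choose K) = (\<Prod>i<K. real P - real m - real i) / fact K"
    using assms by (simp add: binomial_gbinomial gbinomial_prod_rev atLeast0LessThan)
  have den: "real (P choose K) = (\<Prod>i<K. real P - real i) / fact K"
    by (simp add: binomial_gbinomial gbinomial_prod_rev atLeast0LessThan)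
  have "(\<Prod>i<K. real P - real i) \<noteq> 0" using assms by auto
  then have "real ((P - m) choose K) / real (P choose K)
        = (\<Prod>i<K. (real P - real m - real i) / (real P - real i))"
    unfolding num den by (simp add: prod_dividef)
  also have "\<dots> = (\<Prod>i<K. 1 - real m / (real P - real i))"
    using assms by (intro prod.cong) (auto simp: field_simps)
  finally show ?thesis .
qed

text \<open>1 - key_ratio K P i is the probability that the (i+1)-st key of a ring avoids a fixed
  ring of K keys, given that its first i keys did.\<close>

definition key_ratio :: "nat \<Rightarrow> nat \<Rightarrow> nat \<Rightarrow> real" where
  "key_ratio K P i = real K / (real P - real i)"

lemma key_ratio_bounds:
  assumes "3 * K \<le> P" "i < K"
  shows "0 < key_ratio K P i" "key_ratio K P i \<le> 1 / 2"
proof -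
  have "2 * real K \<le> real P - real i" using assms by linarith
  then show "0 < key_ratio K P i" "key_ratio K P i \<le> 1 / 2"
    using assms(2) by (auto simp: key_ratio_def field_simps)
qed

lemma q_rkg_eq_prod:
  "2 * K \<le> P \<Longrightarrow> q_rkg K P = (\<Prod>i<K. 1 - key_ratio K P i)"
  using binomial_diff_div_binomial[of K K P] by (simp add: q_rkg_def key_ratio_def)

lemma r_rkg_eq_prod:
  "3 * K \<le> P \<Longrightarrow> r_rkg K P = (\<Prod>i<K. 1 - 2 * key_ratio K P i)"
  using binomial_diff_div_binomial[of "2 * K" K P] by (simp add: r_rkg_def key_ratio_def)

lemma p_rkg_bounds:
  assumes "3 * K \<le> P"
  defines "s \<equiv> \<Sum>i<K. key_ratio K P i"
  shows "s * q_rkg K P \<le> p_rkg K P" "p_rkg K P \<le> s"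
proof -
  let ?x = "\<lambda>i. 1 - key_ratio K P i"
  have q: "q_rkg K P = prod ?x {..<K}" using assms(1) by (simp add: q_rkg_eq_prod)
  have p: "p_rkg K P = prod (\<lambda>i. ?x i + key_ratio K P i) {..<K} - prod ?x {..<K}"
    by (simp add: p_rkg_def q)
  show "s * q_rkg K P \<le> p_rkg K P" unfolding p q s_def
    by (rule sum_mult_prod_le_prod_add_diff) (auto dest: key_ratio_bounds[OF assms(1)])
  show "p_rkg K P \<le> s" unfolding p s_def
    by (rule prod_add_diff_le_sum) (auto dest: key_ratio_bounds[OF assms(1)])
qed

lemma q_rkg_sq_minus_r_rkg_bounds:
  assumes "3 * K \<le> P"
  defines "t \<equiv> \<Sum>i<K. key_ratio K P i ^ 2"
  shows "t * r_rkg K P \<le> q_rkg K P ^ 2 - r_rkg K P" "q_rkg K P ^ 2 - r_rkg K P \<le> t"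
proof -
  let ?x = "\<lambda>i. 1 - 2 * key_ratio K P i"
  have r: "r_rkg K P = prod ?x {..<K}" using assms(1) by (simp add: r_rkg_eq_prod)
  have "q_rkg K P ^ 2 = (\<Prod>i<K. (1 - key_ratio K P i) ^ 2)"
    using assms(1) by (simp add: q_rkg_eq_prod prod_power_distrib)
  also have "\<dots> = prod (\<lambda>i. ?x i + key_ratio K P i ^ 2) {..<K}"
    by (simp add: power2_diff algebra_simps)
  finally have q2: "q_rkg K P ^ 2 = \<dots>" .
  have bounds: "0 \<le> ?x i \<and> ?x i \<le> 1 \<and> 0 \<le> key_ratio K P i ^ 2
      \<and> ?x i + key_ratio K P i ^ 2 \<le> 1" if "i \<in> {..<K}" for i
  proof -
    have "0 < key_ratio K P i" "key_ratio K P i \<le> 1 / 2"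
      using key_ratio_bounds[OF assms(1)] that by auto
    then show ?thesis by (auto simp: power2_eq_square mult_left_le)
  qed
  show "t * r_rkg K P \<le> q_rkg K P ^ 2 - r_rkg K P" unfolding q2 r t_def
    by (rule sum_mult_prod_le_prod_add_diff) (use bounds in auto)
  show "q_rkg K P ^ 2 - r_rkg K P \<le> t" unfolding q2 r t_def
    by (rule prod_add_diff_le_sum) (use bounds in auto)
qed

lemma tendsto_real_div_real_diff_const:
  "((\<lambda>P::nat. real P / (real P - c)) \<longlongrightarrow> 1) at_top"
proof -
  have "((\<lambda>P::nat. 1 / (1 - c / real P)) \<longlongrightarrow> 1 / (1 - 0)) at_top"
    by (intro tendsto_intros lim_const_over_n) auto
  moreover have "eventually (\<lambda>P::nat. 1 / (1 - c / real P) = real P / (real P - c)) at_top"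
    using eventually_gt_at_top[of "nat \<lceil>c\<rceil>"] by eventually_elim (auto simp: field_simps)
  ultimately show ?thesis by (simp add: tendsto_cong)
qed

lemma tendsto_real_mult_key_ratio: "((\<lambda>P. real P * key_ratio K P i) \<longlongrightarrow> real K) at_top"
proof -
  have "(\<lambda>P. real P * key_ratio K P i) = (\<lambda>P. real K * (real P / (real P - real i)))"
    by (simp add: key_ratio_def mult.commute)
  then show ?thesis
    using tendsto_mult_left[OF tendsto_real_div_real_diff_const[of "real i"], of "real K"] by simp
qed

lemma tendsto_key_ratio: "((\<lambda>P. key_ratio K P i) \<longlongrightarrow> 0) at_top"
proof -
  have "((\<lambda>P. real P * key_ratio K P i * (1 / real P)) \<longlongrightarrow> real K * 0) at_top"
    by (intro tendsto_mult tendsto_real_mult_key_ratio lim_1_over_n)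
  moreover have "eventually (\<lambda>P. real P * key_ratio K P i * (1 / real P) = key_ratio K P i) at_top"
    using eventually_gt_at_top[of 0] by eventually_elim auto
  ultimately show ?thesis by (simp add: tendsto_cong)
qed

lemma tendsto_real_mult_sum_key_ratio:
  "((\<lambda>P. real P * (\<Sum>i<K. key_ratio K P i)) \<longlongrightarrow> real K ^ 2) at_top"
  using tendsto_sum[of "{..<K}" "\<lambda>i P. real P * key_ratio K P i" "\<lambda>_. real K"]
  by (simp add: tendsto_real_mult_key_ratio sum_distrib_left power2_eq_square)

lemma tendsto_real_sq_mult_sum_key_ratio_sq:
  "((\<lambda>P. real P ^ 2 * (\<Sum>i<K. key_ratio K P i ^ 2)) \<longlongrightarrow> real K ^ 3) at_top"
proof -
  have "((\<lambda>P. \<Sum>i<K. (real P * key_ratio K P i) ^ 2) \<longlongrightarrow> (\<Sum>i<K. real K ^ 2)) at_top"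
    by (intro tendsto_sum tendsto_power tendsto_real_mult_key_ratio)
  moreover have "(\<lambda>P. \<Sum>i<K. (real P * key_ratio K P i) ^ 2)
      = (\<lambda>P. real P ^ 2 * (\<Sum>i<K. key_ratio K P i ^ 2))"
    by (simp add: sum_distrib_left power_mult_distrib)
  moreover have "(\<Sum>i<K. real K ^ 2) = real K ^ 3"
    by (simp add: power3_eq_cube power2_eq_square)
  ultimately show ?thesis by simp
qed

lemma q_rkg_tendsto: "(q_rkg K \<longlongrightarrow> 1) at_top"
proof -
  have "((\<lambda>P. \<Prod>i<K. 1 - key_ratio K P i) \<longlongrightarrow> (\<Prod>i<K. 1 - 0)) at_top"
    by (intro tendsto_prod tendsto_diff tendsto_const tendsto_key_ratio)
  moreover have "eventually (\<lambda>P. (\<Prod>i<K. 1 - key_ratio K P i) = q_rkg K P) at_top"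
    using eventually_ge_at_top[of "2 * K"] by eventually_elim (simp add: q_rkg_eq_prod)
  ultimately show ?thesis by (simp add: tendsto_cong)
qed

lemma r_rkg_tendsto: "(r_rkg K \<longlongrightarrow> 1) at_top"
proof -
  have "((\<lambda>P. \<Prod>i<K. 1 - 2 * key_ratio K P i) \<longlongrightarrow> (\<Prod>i<K. 1 - 2 * 0)) at_top"
    by (intro tendsto_prod tendsto_diff tendsto_mult tendsto_const tendsto_key_ratio)
  moreover have "eventually (\<lambda>P. (\<Prod>i<K. 1 - 2 * key_ratio K P i) = r_rkg K P) at_top"
    using eventually_ge_at_top[of "3 * K"] by eventually_elim (simp add: r_rkg_eq_prod)
  ultimately show ?thesis by (simp add: tendsto_cong)
qed

lemma asymp_equivI_tendsto_mult:
  fixes f g :: "'a \<Rightarrow> real"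
  assumes "((\<lambda>x. g x * f x) \<longlongrightarrow> c) F" "c \<noteq> 0" "eventually (\<lambda>x. g x \<noteq> 0) F"
  shows "f \<sim>[F] (\<lambda>x. c / g x)"
proof (rule asymp_equivI')
  have "((\<lambda>x. g x * f x / c) \<longlongrightarrow> c / c) F" by (intro tendsto_divide assms tendsto_const)
  moreover have "eventually (\<lambda>x. g x * f x / c = f x / (c / g x)) F"
    using assms(3) by eventually_elim (simp add: field_simps)
  ultimately show "((\<lambda>x. f x / (c / g x)) \<longlongrightarrow> 1) F" using assms(2) by (simp add: tendsto_cong)
qed

lemma sum_key_ratio_asymp_equiv:
  "K > 0 \<Longrightarrow> (\<lambda>P. \<Sum>i<K. key_ratio K P i) \<sim>[at_top] (\<lambda>P. real K ^ 2 / real P)"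
  by (intro asymp_equivI_tendsto_mult tendsto_real_mult_sum_key_ratio eventually_gt_at_top) auto

lemma sum_key_ratio_sq_asymp_equiv:
  "K > 0 \<Longrightarrow> (\<lambda>P. \<Sum>i<K. key_ratio K P i ^ 2) \<sim>[at_top] (\<lambda>P. real K ^ 3 / real P ^ 2)"
  by (intro asymp_equivI_tendsto_mult tendsto_real_sq_mult_sum_key_ratio_sq eventually_gt_at_top) auto

lemma p_rkg_asymp_equiv:
  assumes "K > 0"
  shows "p_rkg K \<sim>[at_top] (\<lambda>P. real K ^ 2 / real P)"
proof (rule asymp_equiv_sandwich_real)
  let ?s = "\<lambda>P. \<Sum>i<K. key_ratio K P i"
  have "(\<lambda>P. ?s P * q_rkg K P) \<sim>[at_top] (\<lambda>P. real K ^ 2 / real P * 1)"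
    by (intro asymp_equiv_mult sum_key_ratio_asymp_equiv assms
        tendsto_imp_asymp_equiv_const q_rkg_tendsto) simp
  then show "(\<lambda>P. ?s P * q_rkg K P) \<sim>[at_top] (\<lambda>P. real K ^ 2 / real P)" by simp
  show "?s \<sim>[at_top] (\<lambda>P. real K ^ 2 / real P)"
    using sum_key_ratio_asymp_equiv[OF assms] .
  show "eventually (\<lambda>P. p_rkg K P \<in> {?s P * q_rkg K P..?s P}) at_top"
    using eventually_ge_at_top[of "3 * K"] by eventually_elim (simp add: p_rkg_bounds)
qed

lemma q_rkg_sq_minus_r_rkg_asymp_equiv:
  assumes "K > 0"
  shows "(\<lambda>P. q_rkg K P ^ 2 - r_rkg K P) \<sim>[at_top] (\<lambda>P. real K ^ 3 / real P ^ 2)"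
proof (rule asymp_equiv_sandwich_real)
  let ?t = "\<lambda>P. \<Sum>i<K. key_ratio K P i ^ 2"
  have "(\<lambda>P. ?t P * r_rkg K P) \<sim>[at_top] (\<lambda>P. real K ^ 3 / real P ^ 2 * 1)"
    by (intro asymp_equiv_mult sum_key_ratio_sq_asymp_equiv assms
        tendsto_imp_asymp_equiv_const r_rkg_tendsto) simp
  then show "(\<lambda>P. ?t P * r_rkg K P) \<sim>[at_top] (\<lambda>P. real K ^ 3 / real P ^ 2)" by simp
  show "?t \<sim>[at_top] (\<lambda>P. real K ^ 3 / real P ^ 2)"
    using sum_key_ratio_sq_asymp_equiv[OF assms] .
  show "eventually (\<lambda>P. q_rkg K P ^ 2 - r_rkg K P \<in> {?t P * r_rkg K P..?t P}) at_top"
    using eventually_ge_at_top[of "3 * K"]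
    by eventually_elim (simp add: q_rkg_sq_minus_r_rkg_bounds)
qed

lemma asymp_equiv_add_const_left:
  assumes "f \<sim>[F] g" "(\<lambda>_. c) \<in> o[F](g)"
  shows "(\<lambda>x. c + f x) \<sim>[F] (\<lambda>x. c + g x)"
proof -
  have "(\<lambda>x. c + f x) \<sim>[F] g" using asymp_equiv_add_left[OF assms(2)] assms(1) by simp
  also have "g \<sim>[F] (\<lambda>x. c + g x)" using asymp_equiv_add_left'[OF assms(2)] by simp
  finally show ?thesis .
qed

lemma C_K_div_p_rkg_eq:
  assumes "p_rkg K P \<noteq> 0"
  shows "C_K K P / p_rkg K P = 1 + q_rkg K P * (q_rkg K P ^ 2 - r_rkg K P) / p_rkg K P ^ 3"
proof -
  have "((p ^ 3 + q ^ 3 - q * r) / p ^ 2) / p = 1 + q * (q ^ 2 - r) / p ^ 3"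
    if "p \<noteq> 0" for p q r :: real
    using that by (simp add: field_simps power3_eq_cube power2_eq_square)
  moreover have "1 - q_rkg K P = p_rkg K P" by (simp add: p_rkg_def)
  ultimately show ?thesis using assms by (simp add: C_K_def beta_rkg_def)
qed

theorem corollary2:
  fixes K :: nat
  assumes "K \<ge> 1"
  shows "(\<lambda>P::nat. C_K K P / p_rkg K P) \<sim>[at_top] (\<lambda>P::nat. 1 + real P / real K ^ 3)"
proof -
  have K: "K > 0" using assms by simp
  let ?q = "q_rkg K" and ?r = "r_rkg K" and ?p = "p_rkg K"
  let ?X = "\<lambda>P. ?q P * (?q P ^ 2 - ?r P) / ?p P ^ 3"
  have "?X \<sim>[at_top] (\<lambda>P. 1 * (real K ^ 3 / real P ^ 2) / (real K ^ 2 / real P) ^ 3)"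
    by (intro asymp_equiv_intros tendsto_imp_asymp_equiv_const q_rkg_tendsto
        q_rkg_sq_minus_r_rkg_asymp_equiv p_rkg_asymp_equiv K) simp
  also have "\<dots> \<sim>[at_top] (\<lambda>P. real P / real K ^ 3)"
    using K by (intro asymp_equiv_refl_ev eventually_mono[OF eventually_gt_at_top[of 0]])
      (simp add: field_simps eval_nat_numeral)
  finally have X: "?X \<sim>[at_top] (\<lambda>P. real P / real K ^ 3)" .
  have one_small: "(\<lambda>_. 1) \<in> o[at_top](\<lambda>P::nat. real P / real K ^ 3)"
    using K by (intro smalloI_tendsto eventually_mono[OF eventually_gt_at_top[of 0]])
      (auto intro: lim_const_over_n)
  have "eventually (\<lambda>P. ?p P \<noteq> 0) at_top"
    using asymp_equiv_eventually_zeros[OF p_rkg_asymp_equiv[OF K]] eventually_gt_at_top[of 0]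
    by eventually_elim (use K in simp)
  then have "(\<lambda>P. C_K K P / ?p P) \<sim>[at_top] (\<lambda>P. 1 + ?X P)"
    by (intro asymp_equiv_refl_ev) (auto elim!: eventually_mono simp: C_K_div_p_rkg_eq)
  also have "\<dots> \<sim>[at_top] (\<lambda>P. 1 + real P / real K ^ 3)"
    using X one_small by (rule asymp_equiv_add_const_left)
  finally show ?thesis .
qed

end
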